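(* (Flocking of the Cucker–Smale model.) Let $(\mathbf x(t),\mathbf v(t))=(\mathbf x_1,\dots,\mathbf x_N,\mathbf v_1,\dots,\mathbf v_N)(t)$ be a global classical solution of the Cucker–Smale system with communication kernel $\phi$ (essential communication diameter $D_\phi>0$) and amplitude $\kappa>0$, with initial data $(\mathbf x_0,\mathbf v_0)$. Assume the set of initial positions $\{\mathbf x_1(0),\dots,\mathbf x_N(0)\}$ is chain connected at scale $r$, with $r\le\frac16D_\phi$. Let $$\kappa_0:=\frac{16N^4}{r}|\delta\mathbf v_0|_2 .$$ Then there is an absolute constant $C\ge1$ such that if $\kappa\ge C\kappa_0$, then for all $t\ge0$ $$\max_{1\le i\le N}|\mathbf v_i(t)-\overline{\mathbf v}_0|\le|\delta\mathbf v_0|_\infty e^{-\frac{\kappa}{N}t}+2N|\delta\mathbf v_0|_2\,e^{-\frac{\kappa}{N^3}t}.$$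
   Context: A communication kernel is a function $\phi:[0,\infty)\to[0,\infty)$ (no regularity or boundedness assumed); $D_\phi:=\sup\{s>0:\ \phi(h)\ge1\text{ for all }0<h\le s\}$. The Cucker–Smale system on $\Omega=\mathbb T^d$ or $\mathbb R^d$ is $\dot{\mathbf x}_i=\mathbf v_i$, $\dot{\mathbf v}_i=\frac{\kappa}{N}\sum_{j=1}^N\phi(|\mathbf x_i-\mathbf x_j|)(\mathbf v_j-\mathbf v_i)$, $i=1,\dots,N$. Notation: $|\delta\mathbf v(t)|_2^2:=\frac1{N^2}\sum_{i,j}|\mathbf v_i(t)-\mathbf v_j(t)|^2$, $|\delta\mathbf v(t)|_\infty:=\max_{i,j}|\mathbf v_i(t)-\mathbf v_j(t)|$, $\delta\mathbf v_0:=\delta\mathbf v(0)$, $\overline{\mathbf v}_0:=\frac1N\sum_i\mathbf v_i(0)$. A finite set $P$ is chain connected at scale $r$ if every pair $\mathbf x,\mathbf y\in P$ is connected by a finite chain of balls $B_1,\dots,B_k$ of diameter $r$ with centers in $P$, consecutive balls having non-empty intersection, $\mathbf x\in\overline{B_1}$, $\mathbf y\in\overline{B_k}$. *)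

theory Defs
  imports Complex_Main "HOL-Library.Extended_Real"
begin

text \<open>Points of R^d are represented as functions nat => real; only the
components k < d matter. The dimension d is an explicit natural number so that
the constant C of the theorem can be required to be independent of d.\<close>

definition enorm :: "nat \<Rightarrow> (nat \<Rightarrow> real) \<Rightarrow> real" where
  "enorm d u = sqrt (\<Sum>k<d. (u k)\<^sup>2)"

text \<open>Distance on the flat torus R^d / (L Z)^d, computed on lifted coordinates.\<close>
definition torus_dist :: "real \<Rightarrow> nat \<Rightarrow> (nat \<Rightarrow> real) \<Rightarrow> (nat \<Rightarrow> real) \<Rightarrow> real" where
  "torus_dist L d u w = Inf {enorm d (\<lambda>k. u k - w k - L * real_of_int (m k)) | m :: nat \<Rightarrow> int. True}"

definition omega_dist :: "bool \<Rightarrow> real \<Rightarrow> nat \<Rightarrow> (nat \<Rightarrow> real) \<Rightarrow> (nat \<Rightarrow> real) \<Rightarrow> real" where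
  "omega_dist torus L d u w = (if torus then torus_dist L d u w else enorm d (\<lambda>k. u k - w k))"

text \<open>Essential communication diameter, valued in the extended reals
(it is +infinity if phi >= 1 on all of (0, infinity)).\<close>
definition D_phi :: "(real \<Rightarrow> real) \<Rightarrow> ereal" where
  "D_phi \<phi> = Sup (ereal ` {s. s > 0 \<and> (\<forall>h. 0 < h \<and> h \<le> s \<longrightarrow> \<phi> h \<ge> 1)})"

text \<open>Chain connectedness at scale r with respect to a distance function: balls of
diameter r are the open balls of radius r/2; their closures are the closed balls.\<close>
definition chain_connected ::
  "('p \<Rightarrow> 'p \<Rightarrow> real) \<Rightarrow> real \<Rightarrow> 'p set \<Rightarrow> bool" where
  "chain_connected \<delta> r P \<longleftrightarrow>
     (\<forall>x\<in>P. \<forall>y\<in>P. \<exists>cs. cs \<noteq> [] \<and> set cs \<subseteq> P \<and>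
        (\<forall>i. Suc i < length cs \<longrightarrow>
             (\<exists>z. \<delta> (cs ! i) z < r / 2 \<and> \<delta> (cs ! Suc i) z < r / 2)) \<and>
        \<delta> (hd cs) x \<le> r / 2 \<and> \<delta> (last cs) y \<le> r / 2)"

definition CS_solution ::
  "bool \<Rightarrow> real \<Rightarrow> nat \<Rightarrow> nat \<Rightarrow> real \<Rightarrow> (real \<Rightarrow> real)
   \<Rightarrow> (nat \<Rightarrow> real \<Rightarrow> nat \<Rightarrow> real) \<Rightarrow> (nat \<Rightarrow> real \<Rightarrow> nat \<Rightarrow> real) \<Rightarrow> bool" where
  "CS_solution torus L d N \<kappa> \<phi> x v \<longleftrightarrow>
     (\<forall>i<N. \<forall>k<d. \<forall>t\<ge>0.
        ((\<lambda>s. x i s k) has_real_derivative v i t k) (at t within {0..}) \<and>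
        ((\<lambda>s. v i s k) has_real_derivative
            (\<kappa> / real N) * (\<Sum>j<N. \<phi> (omega_dist torus L d (x i t) (x j t)) * (v j t k - v i t k)))
          (at t within {0..}))"

definition dv2 :: "nat \<Rightarrow> nat \<Rightarrow> (nat \<Rightarrow> real \<Rightarrow> nat \<Rightarrow> real) \<Rightarrow> real \<Rightarrow> real" where
  "dv2 d N v t = sqrt ((1 / (real N)\<^sup>2) *
      (\<Sum>i<N. \<Sum>j<N. (enorm d (\<lambda>k. v i t k - v j t k))\<^sup>2))"

definition dvinf :: "nat \<Rightarrow> nat \<Rightarrow> (nat \<Rightarrow> real \<Rightarrow> nat \<Rightarrow> real) \<Rightarrow> real \<Rightarrow> real" where
  "dvinf d N v t = Max {enorm d (\<lambda>k. v i t k - v j t k) | i j. i < N \<and> j < N}"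

definition vbar0 :: "nat \<Rightarrow> (nat \<Rightarrow> real \<Rightarrow> nat \<Rightarrow> real) \<Rightarrow> nat \<Rightarrow> real" where
  "vbar0 N v = (\<lambda>k. (1 / real N) * (\<Sum>i<N. v i 0 k))"

end

theory Submission
  imports Defs "HOL-Analysis.Analysis"
begin

text \<open>The energy \<open>E(t) = \<Sum>\<^sub>i |v\<^sub>i(t) - v\<^sub>0|\<^sup>2\<close> around the conserved mean velocity \<open>v\<^sub>0\<close>
  has derivative \<open>-(\<kappa>/N) \<Sum>\<^sub>i\<^sub>,\<^sub>j \<phi>(|x\<^sub>i - x\<^sub>j|) |v\<^sub>i - v\<^sub>j|\<^sup>2\<close>. As long as no relative position
  \<open>x\<^sub>i - x\<^sub>j\<close> has drifted by more than \<open>r\<close> from its initial value, agents that start within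
  \<open>r\<close> of each other stay within \<open>2r < D\<^sub>\<phi>\<close>, where \<open>\<phi> \<ge> 1\<close>. By chain connectedness these
  pairs form a connected graph, and a discrete Poincar\'e inequality on it gives
  \<open>E' \<le> -(2\<kappa>/N\<^sup>3) E\<close>. The resulting exponential decay of the velocity differences bounds
  every drift by \<open>2 N\<^sup>3 \<surd>E(0) / \<kappa> \<le> r/2\<close> when \<open>\<kappa> \<ge> \<kappa>\<^sub>0\<close>, so by continuous induction
  the drifts never reach \<open>r\<close> and the decay holds for all time. The theorem follows with
  \<open>C = 1\<close>, since \<open>|v\<^sub>i(t) - v\<^sub>0| \<le> \<surd>E(t) \<le> N |\<delta>v\<^sub>0|\<^sub>2 exp(-\<kappa>t/N\<^sup>3)\<close>.\<close>

section \<open>Euclidean norm and distances on \<open>\<Omega>\<close>\<close>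

lemma enorm_eq_L2_set: "enorm d u = L2_set u {..<d}"
  by (simp add: enorm_def L2_set_def)

lemma enorm_nonneg: "0 \<le> enorm d u"
  by (simp add: enorm_def sum_nonneg)

lemma enorm_power2: "(enorm d u)\<^sup>2 = (\<Sum>k<d. (u k)\<^sup>2)"
  by (simp add: enorm_def sum_nonneg)

lemma enorm_minus: "enorm d (\<lambda>k. - u k) = enorm d u"
  by (simp add: enorm_def)

lemma enorm_diff_commute: "enorm d (\<lambda>k. a k - b k) = enorm d (\<lambda>k. b k - a k)"
  by (simp add: enorm_def power2_commute)

lemma enorm_triangle: "enorm d (\<lambda>k. a k + b k) \<le> enorm d a + enorm d b"
  unfolding enorm_eq_L2_set by (rule L2_set_triangle_ineq)

lemma enorm_diff_triangle:
  "enorm d (\<lambda>k. a k - b k) \<le> enorm d (\<lambda>k. a k - c k) + enorm d (\<lambda>k. c k - b k)"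
  using enorm_triangle[of d "\<lambda>k. a k - c k" "\<lambda>k. c k - b k"] by simp

lemma abs_le_enorm: "k < d \<Longrightarrow> \<bar>u k\<bar> \<le> enorm d u"
  unfolding enorm_def
  by (rule real_le_rsqrt) (auto intro!: member_le_sum[of k "{..<d}" "\<lambda>k. (u k)^2", simplified])

lemma sum_mult_le_enorm: "(\<Sum>k<d. a k * b k) \<le> enorm d a * enorm d b"
proof -
  have "(\<Sum>k<d. a k * b k) \<le> (\<Sum>k<d. \<bar>a k\<bar> * \<bar>b k\<bar>)"
    by (rule sum_mono) (simp flip: abs_mult)
  also have "\<dots> \<le> enorm d a * enorm d b"
    unfolding enorm_eq_L2_set by (rule L2_set_mult_ineq)
  finally show ?thesis .
qed

lemma torus_dist_le: "torus_dist L d u w \<le> enorm d (\<lambda>k. u k - w k - L * real_of_int (m k))"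
  unfolding torus_dist_def by (rule cInf_lower) (auto intro: bdd_belowI[of _ 0] enorm_nonneg)

lemma torus_dist_greatest:
  "(\<And>m. c \<le> enorm d (\<lambda>k. u k - w k - L * real_of_int (m k))) \<Longrightarrow> c \<le> torus_dist L d u w"
  unfolding torus_dist_def by (rule cInf_greatest) auto

lemma torus_dist_nonneg: "0 \<le> torus_dist L d u w"
  by (rule torus_dist_greatest) (simp add: enorm_nonneg)

lemma torus_dist_commute: "torus_dist L d u w = torus_dist L d w u"
proof -
  have le: "torus_dist L d u w \<le> torus_dist L d w u" for u w
  proof (rule torus_dist_greatest)
    fix m
    have "torus_dist L d u w \<le> enorm d (\<lambda>k. u k - w k - L * real_of_int (- m k))"
      by (rule torus_dist_le)
    also have "\<dots> = enorm d (\<lambda>k. w k - u k - L * real_of_int (m k))"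
      using enorm_minus[of d "\<lambda>k. w k - u k - L * real_of_int (m k)"] by (simp add: algebra_simps)
    finally show "torus_dist L d u w \<le> \<dots>" .
  qed
  show ?thesis using le[of u w] le[of w u] by simp
qed

lemma torus_dist_triangle: "torus_dist L d a b \<le> torus_dist L d a c + torus_dist L d c b"
proof -
  have "torus_dist L d a b - torus_dist L d c b \<le> torus_dist L d a c"
  proof (rule torus_dist_greatest)
    fix m1
    have "torus_dist L d a b - enorm d (\<lambda>k. a k - c k - L * real_of_int (m1 k)) \<le> torus_dist L d c b"
    proof (rule torus_dist_greatest)
      fix m2
      have "torus_dist L d a b \<le> enorm d (\<lambda>k. a k - b k - L * real_of_int (m1 k + m2 k))"
        by (rule torus_dist_le)
      also have "\<dots> \<le> enorm d (\<lambda>k. a k - c k - L * real_of_int (m1 k))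
                     + enorm d (\<lambda>k. c k - b k - L * real_of_int (m2 k))"
        using enorm_triangle[of d "\<lambda>k. a k - c k - L * real_of_int (m1 k)"
                                  "\<lambda>k. c k - b k - L * real_of_int (m2 k)"]
        by (simp add: algebra_simps)
      finally show "torus_dist L d a b - enorm d (\<lambda>k. a k - c k - L * real_of_int (m1 k))
                    \<le> enorm d (\<lambda>k. c k - b k - L * real_of_int (m2 k))"
        by simp
    qed
    then show "torus_dist L d a b - torus_dist L d c b \<le> enorm d (\<lambda>k. a k - c k - L * real_of_int (m1 k))"
      by simp
  qed
  then show ?thesis by simp
qed

lemma torus_dist_le_shift:
  "torus_dist L d a b \<le> torus_dist L d a' b' + enorm d (\<lambda>k. (a k - b k) - (a' k - b' k))"
proof -
  have "torus_dist L d a b - enorm d (\<lambda>k. (a k - b k) - (a' k - b' k)) \<le> torus_dist L d a' b'"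
  proof (rule torus_dist_greatest)
    fix m
    have "torus_dist L d a b \<le> enorm d (\<lambda>k. a k - b k - L * real_of_int (m k))"
      by (rule torus_dist_le)
    also have "\<dots> \<le> enorm d (\<lambda>k. (a k - b k) - (a' k - b' k))
                   + enorm d (\<lambda>k. a' k - b' k - L * real_of_int (m k))"
      using enorm_triangle[of d "\<lambda>k. (a k - b k) - (a' k - b' k)" "\<lambda>k. a' k - b' k - L * real_of_int (m k)"]
      by (simp add: algebra_simps)
    finally show "torus_dist L d a b - enorm d (\<lambda>k. (a k - b k) - (a' k - b' k))
                  \<le> enorm d (\<lambda>k. a' k - b' k - L * real_of_int (m k))"
      by simp
  qed
  then show ?thesis by simp
qed

lemma int_multiple_if_approximable:
  fixes c L :: real
  assumes "L > 0" and approx: "\<And>e. e > 0 \<Longrightarrow> \<exists>m::int. \<bar>c - L * m\<bar> < e"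
  shows "\<exists>m::int. c = L * m"
proof -
  obtain m :: int where m: "\<bar>c - L * m\<bar> < L / 2"
    using approx[of "L / 2"] \<open>L > 0\<close> by auto
  have "c = L * m"
  proof (rule ccontr)
    assume "c \<noteq> L * m"
    then obtain m' :: int where m': "\<bar>c - L * m'\<bar> < \<bar>c - L * m\<bar>"
      using approx[of "\<bar>c - L * m\<bar>"] by auto
    then have "m' \<noteq> m" by auto
    then have "L \<le> \<bar>L * m - L * m'\<bar>"
      using \<open>L > 0\<close> by (simp flip: right_diff_distrib of_int_diff add: abs_mult)
    then show False using m m' by linarith
  qed
  then show ?thesis ..
qed

lemma omega_dist_nonneg: "0 \<le> omega_dist torus L d a b"
  by (simp add: omega_dist_def torus_dist_nonneg enorm_nonneg)

lemma omega_dist_commute: "omega_dist torus L d a b = omega_dist torus L d b a"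
  by (simp add: omega_dist_def torus_dist_commute enorm_diff_commute[of d a b])

lemma omega_dist_triangle:
  "omega_dist torus L d a b \<le> omega_dist torus L d a c + omega_dist torus L d c b"
  by (simp add: omega_dist_def torus_dist_triangle enorm_diff_triangle)

lemma omega_dist_le_shift:
  "omega_dist torus L d a b \<le> omega_dist torus L d a' b' + enorm d (\<lambda>k. (a k - b k) - (a' k - b' k))"
  using torus_dist_le_shift[of L d a b a' b']
    enorm_triangle[of d "\<lambda>k. a' k - b' k" "\<lambda>k. (a k - b k) - (a' k - b' k)"]
  by (simp add: omega_dist_def)

lemma omega_dist_eq_0_imp_int_multiple:
  assumes "omega_dist torus L d a b = 0" "L > 0" "k < d"
  shows "\<exists>m::int. a k - b k = L * m"
proof (cases torus)
  case True
  show ?thesis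
  proof (rule int_multiple_if_approximable[OF \<open>L > 0\<close>])
    fix e :: real assume "e > 0"
    then have "torus_dist L d a b < e" using assms True by (simp add: omega_dist_def)
    then obtain m :: "nat \<Rightarrow> int" where "enorm d (\<lambda>k. a k - b k - L * real_of_int (m k)) < e"
      unfolding torus_dist_def by (subst (asm) cInf_less_iff) (auto intro: bdd_belowI[of _ 0] enorm_nonneg)
    then show "\<exists>m::int. \<bar>a k - b k - L * m\<bar> < e"
      using abs_le_enorm[OF \<open>k < d\<close>, of "\<lambda>k. a k - b k - L * real_of_int (m k)"]
      by (intro exI[of _ "m k"]) simp
  qed
next
  case False
  then have "enorm d (\<lambda>k. a k - b k) = 0" using assms by (simp add: omega_dist_def)
  then have "a k - b k = L * of_int 0" using abs_le_enorm[OF \<open>k < d\<close>, of "\<lambda>k. a k - b k"] by simp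
  then show ?thesis ..
qed

section \<open>Differential inequalities and continuous induction\<close>

lemma sqrt_exp: "sqrt (exp a) = exp (a / 2)"
  by (rule real_sqrt_unique) (simp_all add: power2_eq_square flip: exp_add)

lemma nonincreasing_if_deriv_nonpos_ae:
  fixes f f' :: "real \<Rightarrow> real"
  assumes "a \<le> b" "{a..b} \<subseteq> U"
    and der: "\<And>t. t \<in> {a..b} \<Longrightarrow> (f has_real_derivative f' t) (at t within U)"
    and "negligible S"
    and nonpos: "\<And>t. t \<in> {a..b} - S \<Longrightarrow> f' t \<le> 0"
  shows "f b \<le> f a"
proof -
  have "(f' has_integral (f b - f a)) {a..b}"
    using der \<open>{a..b} \<subseteq> U\<close>
    by (intro fundamental_theorem_of_calculus[OF \<open>a \<le> b\<close>])
       (auto simp flip: has_real_derivative_iff_has_vector_derivative intro: has_field_derivative_subset)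
  then have "((\<lambda>t. if t \<in> S then 0 else f' t) has_integral (f b - f a)) {a..b}"
    by (rule has_integral_spike[OF \<open>negligible S\<close>, rotated]) auto
  then have "f b - f a \<le> 0"
    by (rule has_integral_le[OF _ has_integral_0]) (use nonpos in auto)
  then show ?thesis by simp
qed

lemma exp_decay_if_deriv_le:
  fixes f f' :: "real \<Rightarrow> real"
  assumes "a \<le> b" "{a..b} \<subseteq> U"
    and der: "\<And>t. t \<in> {a..b} \<Longrightarrow> (f has_real_derivative f' t) (at t within U)"
    and "negligible S"
    and decay: "\<And>t. t \<in> {a..b} - S \<Longrightarrow> f' t \<le> - c * f t"
  shows "f b \<le> f a * exp (- c * (b - a))"
proof -
  have "f b * exp (c * b) \<le> f a * exp (c * a)"
  proof (rule nonincreasing_if_deriv_nonpos_ae[OF assms(1,2) _ \<open>negligible S\<close>])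
    show "((\<lambda>t. f t * exp (c * t)) has_real_derivative (f' t + c * f t) * exp (c * t)) (at t within U)"
      if "t \<in> {a..b}" for t
      using der[OF that] by (auto intro!: derivative_eq_intros simp: algebra_simps)
    show "(f' t + c * f t) * exp (c * t) \<le> 0" if "t \<in> {a..b} - S" for t
      using decay[OF that] by (simp add: mult_nonpos_nonneg)
  qed
  then have "f b * exp (c * b) * exp (- c * b) \<le> f a * exp (c * a) * exp (- c * b)"
    by (rule mult_right_mono) simp
  then show ?thesis by (simp add: mult.assoc right_diff_distrib flip: exp_add)
qed

text \<open>The component of \<open>X(t) - X(a)\<close> along the final displacement \<open>e\<close> grows no faster than
  \<open>K |e| (1 - exp(-\<alpha>(t - a))) / \<alpha>\<close>; at \<open>t = b\<close> it equals \<open>|e|\<^sup>2\<close>.\<close>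
lemma enorm_displacement_le:
  fixes X V :: "real \<Rightarrow> nat \<Rightarrow> real"
  assumes "\<alpha> > 0" "a \<le> b" "{a..b} \<subseteq> U"
    and der: "\<And>t k. t \<in> {a..b} \<Longrightarrow> k < d \<Longrightarrow> ((\<lambda>s. X s k) has_real_derivative V t k) (at t within U)"
    and speed: "\<And>t. t \<in> {a..b} \<Longrightarrow> enorm d (V t) \<le> K * exp (- \<alpha> * (t - a))"
  shows "enorm d (\<lambda>k. X b k - X a k) \<le> K / \<alpha>"
proof -
  define e where "e = (\<lambda>k. X b k - X a k)"
  define p where "p t = (\<Sum>k<d. e k * (X t k - X a k)) + enorm d e * (K / \<alpha>) * exp (- \<alpha> * (t - a))" for t
  have "K \<ge> 0" using speed[of a] \<open>a \<le> b\<close> enorm_nonneg[of d "V a"] by simp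
  have "p b \<le> p a"
  proof (rule nonincreasing_if_deriv_nonpos_ae[OF \<open>a \<le> b\<close> \<open>{a..b} \<subseteq> U\<close> _ negligible_empty])
    show "(p has_real_derivative (\<Sum>k<d. e k * V t k) - enorm d e * K * exp (- \<alpha> * (t - a))) (at t within U)"
      if "t \<in> {a..b}" for t
      unfolding p_def using \<open>\<alpha> > 0\<close> that
      by (auto intro!: derivative_eq_intros DERIV_sum der simp: field_simps)
    show "(\<Sum>k<d. e k * V t k) - enorm d e * K * exp (- \<alpha> * (t - a)) \<le> 0" if "t \<in> {a..b} - {}" for t
    proof -
      have "(\<Sum>k<d. e k * V t k) \<le> enorm d e * enorm d (V t)" by (rule sum_mult_le_enorm)
      also have "\<dots> \<le> enorm d e * (K * exp (- \<alpha> * (t - a)))"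
        using speed that by (intro mult_left_mono) (auto simp: enorm_nonneg)
      finally show ?thesis by simp
    qed
  qed
  moreover have "(\<Sum>k<d. e k * (X b k - X a k)) = (enorm d e)\<^sup>2"
    unfolding enorm_power2 by (simp add: e_def power2_eq_square)
  moreover have "0 \<le> enorm d e * (K / \<alpha>) * exp (- \<alpha> * (b - a))"
    using \<open>K \<ge> 0\<close> \<open>\<alpha> > 0\<close> by (simp add: enorm_nonneg)
  ultimately have "enorm d e * enorm d e \<le> enorm d e * (K / \<alpha>)"
    by (simp add: p_def power2_eq_square)
  then have "enorm d e \<le> K / \<alpha>"
  proof (cases "enorm d e = 0")
    case True then show ?thesis using \<open>K \<ge> 0\<close> \<open>\<alpha> > 0\<close> by simp
  next
    case False
    then have "0 < enorm d e" using enorm_nonneg[of d e] by simp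
    with \<open>enorm d e * enorm d e \<le> enorm d e * (K / \<alpha>)\<close> show ?thesis
      by (rule mult_left_le_imp_le)
  qed
  then show ?thesis unfolding e_def .
qed

lemma eventually_nonzero_small_increment:
  fixes f :: "real \<Rightarrow> real"
  assumes "(f has_real_derivative w) (at t0 within U)" "w \<noteq> 0" "0 < \<epsilon>"
  shows "eventually (\<lambda>s. 0 < \<bar>f s - f t0\<bar> \<and> \<bar>f s - f t0\<bar> < \<epsilon>) (at t0 within U)"
proof -
  have "((\<lambda>s. (f s - f t0) / (s - t0)) \<longlongrightarrow> w) (at t0 within U)"
    using assms(1) by (simp add: has_field_derivative_iff)
  then have "eventually (\<lambda>s. \<bar>(f s - f t0) / (s - t0) - w\<bar> < \<bar>w\<bar> / 2) (at t0 within U)"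
    using \<open>w \<noteq> 0\<close> by (auto dest!: tendstoD[of _ _ _ "\<bar>w\<bar> / 2"] simp: dist_real_def)
  moreover have "eventually (\<lambda>s. \<bar>s - t0\<bar> < \<epsilon> / (2 * \<bar>w\<bar>)) (at t0 within U)"
    using \<open>0 < \<epsilon>\<close> \<open>w \<noteq> 0\<close> by (auto simp: eventually_at dist_real_def intro!: exI[of _ "\<epsilon> / (2 * \<bar>w\<bar>)"])
  ultimately show ?thesis
  proof eventually_elim
    case (elim s)
    define q where "q = (f s - f t0) / (s - t0)"
    have "\<bar>q - w\<bar> < \<bar>w\<bar> / 2" using elim(1) by (simp add: q_def)
    then have "0 < \<bar>q\<bar>" "\<bar>q\<bar> < 3 * \<bar>w\<bar> / 2" by linarith+
    then have "s \<noteq> t0" by (auto simp: q_def)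
    then have "\<bar>f s - f t0\<bar> = \<bar>q\<bar> * \<bar>s - t0\<bar>" by (simp add: q_def abs_mult)
    moreover have "\<bar>q\<bar> * \<bar>s - t0\<bar> < (3 * \<bar>w\<bar> / 2) * (\<epsilon> / (2 * \<bar>w\<bar>))"
      using \<open>\<bar>q\<bar> < 3 * \<bar>w\<bar> / 2\<close> elim(2) \<open>0 < \<bar>q\<bar>\<close> by (intro mult_strict_mono) auto
    moreover have "(3 * \<bar>w\<bar> / 2) * (\<epsilon> / (2 * \<bar>w\<bar>)) < \<epsilon>"
      using \<open>w \<noteq> 0\<close> \<open>0 < \<epsilon>\<close> by (simp add: field_simps)
    ultimately show ?case using \<open>0 < \<bar>q\<bar>\<close> \<open>s \<noteq> t0\<close> by simp
  qed
qed

lemma countable_if_discrete: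
  fixes S :: "real set"
  assumes "discrete S"
  shows "countable S"
proof -
  obtain \<delta> where \<delta>: "\<And>s. s \<in> S \<Longrightarrow> \<delta> s > 0 \<and> (\<forall>s'\<in>S. dist s s' < \<delta> s \<longrightarrow> s' = s)"
    using assms unfolding discrete_def isolated_in_dist_Ex_iff by metis
  have "\<exists>q\<in>\<rat>. s - \<delta> s / 2 < q \<and> q < s + \<delta> s / 2" if "s \<in> S" for s
    using Rats_dense_in_real[of "s - \<delta> s / 2" "s + \<delta> s / 2"] \<delta>[OF that] by auto
  then obtain q where q: "\<And>s. s \<in> S \<Longrightarrow> q s \<in> \<rat> \<and> s - \<delta> s / 2 < q s \<and> q s < s + \<delta> s / 2"
    by metis
  have "inj_on q S"
  proof (rule inj_onI, rule ccontr)
    fix s s' assume s: "s \<in> S" "s' \<in> S" "q s = q s'" "s \<noteq> s'"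
    then have "\<delta> s \<le> dist s s'" "\<delta> s' \<le> dist s' s" using \<delta> not_less by metis+
    moreover have "dist s s' < \<delta> s / 2 + \<delta> s' / 2"
      using q[OF s(1)] q[OF s(2)] s(3) by (auto simp: dist_real_def)
    ultimately show False by (simp add: dist_commute)
  qed
  moreover have "q ` S \<subseteq> \<rat>" using q by auto
  ultimately show ?thesis
    using countable_rat countable_subset countable_image_inj_on by metis
qed

lemma negligible_if_countable:
  fixes S :: "'a::euclidean_space set"
  assumes "countable S"
  shows "negligible S"
proof -
  have "negligible (\<Union>x\<in>S. {x})" using assms by (intro negligible_countable_Union) auto
  then show ?thesis by simp
qed

lemma bound_by_continuous_induction:
  fixes f :: "'i \<Rightarrow> real \<Rightarrow> real"
  assumes "finite I"
    and cont: "\<And>i t. i \<in> I \<Longrightarrow> 0 \<le> t \<Longrightarrow> continuous (at t within {0..}) (f i)"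
    and start: "\<And>i. i \<in> I \<Longrightarrow> f i 0 \<le> r"
    and improve: "\<And>s i. 0 \<le> s \<Longrightarrow> (\<And>t j. t \<in> {0..s} \<Longrightarrow> j \<in> I \<Longrightarrow> f j t \<le> r) \<Longrightarrow> i \<in> I \<Longrightarrow> f i s < r"
    and "0 \<le> t" "i \<in> I"
  shows "f i t \<le> r"
proof (rule ccontr)
  define B where "B = {t. 0 \<le> t \<and> (\<exists>i\<in>I. r < f i t)}"
  assume "\<not> f i t \<le> r"
  then have "B \<noteq> {}" unfolding B_def using \<open>0 \<le> t\<close> \<open>i \<in> I\<close> not_le by blast
  have bdd: "bdd_below B" by (rule bdd_belowI[of _ 0]) (auto simp: B_def)
  define s where "s = Inf B"
  have "0 \<le> s" unfolding s_def using \<open>B \<noteq> {}\<close> by (rule cInf_greatest) (auto simp: B_def)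
  have before: "f j t \<le> r" if "0 \<le> t" "t < s" "j \<in> I" for t j
    using cInf_lower[OF _ bdd, of t] that by (force simp: B_def s_def)
  have at_s: "f j s \<le> r" if "j \<in> I" for j
  proof (cases "s = 0")
    case True then show ?thesis using start that by simp
  next
    case False
    then have "s > 0" using \<open>0 \<le> s\<close> by simp
    have lim: "(f j \<longlongrightarrow> f j s) (at s within {0..<s})"
      using cont[OF that \<open>0 \<le> s\<close>] by (auto simp: continuous_within intro: tendsto_within_subset)
    have "eventually (\<lambda>t. f j t \<le> r) (at s within {0..<s})"
      using before that by (auto simp: eventually_at_filter)
    then show ?thesis
      by (rule tendsto_upperbound[OF lim])
         (use \<open>s > 0\<close> in \<open>simp add: at_within_eq_bot_iff\<close>)
  qed
  have below_r: "f j s < r" if "j \<in> I" for j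
    using improve[OF \<open>0 \<le> s\<close> _ that] before at_s by (fastforce simp: order_le_less)
  have "eventually (\<lambda>t. \<forall>j\<in>I. f j t < r) (at s within {0..})"
    using \<open>finite I\<close> cont below_r \<open>0 \<le> s\<close>
    by (intro eventually_ball_finite ballI order_tendstoD(2)) (auto simp: continuous_within)
  then obtain \<delta> where "\<delta> > 0" and \<delta>: "\<And>t. t \<in> {0..} \<Longrightarrow> t \<noteq> s \<Longrightarrow> dist t s < \<delta> \<Longrightarrow> \<forall>j\<in>I. f j t < r"
    unfolding eventually_at by blast
  obtain t' where "t' \<in> B" "t' < s + \<delta>"
    using cInf_less_iff[OF \<open>B \<noteq> {}\<close> bdd, of "s + \<delta>"] \<open>\<delta> > 0\<close> by (auto simp: s_def)
  moreover have "s \<le> t'" using cInf_lower[OF \<open>t' \<in> B\<close> bdd] by (simp add: s_def)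
  moreover have "t' \<noteq> s" using \<open>t' \<in> B\<close> below_r by (force simp: B_def)
  ultimately show False using \<delta>[of t'] by (force simp: B_def dist_real_def)
qed

section \<open>Chains, walks and a Poincar\'e inequality\<close>

lemma walk_diff_power2_le:
  fixes y :: "'a \<Rightarrow> real"
  assumes "xs \<noteq> []"
  shows "(y (hd xs) - y (last xs))\<^sup>2
           \<le> real (length xs - 1) * (\<Sum>l<length xs - 1. (y (xs ! l) - y (xs ! Suc l))\<^sup>2)"
proof -
  define n where "n = length xs - 1"
  define a where "a l = y (xs ! l) - y (xs ! Suc l)" for l
  have "(y (hd xs) - y (last xs))\<^sup>2 = (\<Sum>l<n. a l * 1)\<^sup>2"
    using assms sum_lessThan_telescope'[of "\<lambda>l. y (xs ! l)" n]
    by (simp add: a_def n_def hd_conv_nth last_conv_nth)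
  also have "\<dots> \<le> (\<Sum>l<n. (a l)\<^sup>2) * (\<Sum>l<n. 1\<^sup>2)"
    by (rule Cauchy_Schwarz_ineq_sum)
  finally show ?thesis by (simp add: a_def n_def mult.commute)
qed

lemma distinct_walk_if_walk:
  assumes "xs \<noteq> []" "hd xs = i" "last xs = j" "set xs \<subseteq> S" "successively A xs"
  shows "\<exists>xs. xs \<noteq> [] \<and> hd xs = i \<and> last xs = j \<and> set xs \<subseteq> S \<and> successively A xs \<and> distinct xs"
  using assms
proof (induction "length xs" arbitrary: xs rule: less_induct)
  case less
  show ?case
  proof (cases "distinct xs")
    case True then show ?thesis using less.prems by blast
  next
    case False
    then obtain p q s y where xs: "xs = p @ [y] @ q @ [y] @ s" using not_distinct_decomp by blast
    define ys where "ys = p @ y # s"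
    have "length ys < length xs" by (simp add: xs ys_def)
    moreover have "ys \<noteq> []" "hd ys = i" "last ys = j" "set ys \<subseteq> S" "successively A ys"
      using less.prems unfolding xs ys_def
      by (auto simp: hd_append last_append successively_append_iff successively_Cons)
    ultimately show ?thesis using less.hyps by blast
  qed
qed

lemma sum_consecutive_pairs_le:
  fixes g :: "'a \<times> 'a \<Rightarrow> real"
  assumes "distinct xs" "set xs \<subseteq> S" "finite S" and nonneg: "\<And>p. p \<in> S \<times> S \<Longrightarrow> 0 \<le> g p"
  shows "(\<Sum>l<length xs - 1. g (xs ! l, xs ! Suc l)) \<le> (\<Sum>p\<in>S \<times> S. g p)"
proof -
  define e where "e l = (xs ! l, xs ! Suc l)" for l
  have "inj_on e {..<length xs - 1}"
    using \<open>distinct xs\<close> by (auto simp: inj_on_def e_def nth_eq_iff_index_eq)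
  then have "(\<Sum>l<length xs - 1. g (e l)) = (\<Sum>p\<in>e ` {..<length xs - 1}. g p)"
    by (simp add: sum.reindex)
  also have "\<dots> \<le> (\<Sum>p\<in>S \<times> S. g p)"
  proof (rule sum_mono2)
    show "e ` {..<length xs - 1} \<subseteq> S \<times> S"
      using \<open>set xs \<subseteq> S\<close> by (auto simp: e_def dest!: nth_mem[of _ xs])
  qed (use \<open>finite S\<close> nonneg in auto)
  finally show ?thesis by (simp add: e_def)
qed

text \<open>Each of the \<open>N\<^sup>2\<close> differences is estimated along a simple path with fewer than \<open>N\<close>
  edges.\<close>
lemma graph_poincare:
  fixes y :: "nat \<Rightarrow> real"
  assumes connected: "\<And>i j. i < N \<Longrightarrow> j < N \<Longrightarrow>
      \<exists>xs. xs \<noteq> [] \<and> hd xs = i \<and> last xs = j \<and> set xs \<subseteq> {..<N} \<and> successively A xs"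
  shows "(\<Sum>i<N. \<Sum>j<N. (y i - y j)\<^sup>2) \<le> real N ^ 3 * (\<Sum>i<N. \<Sum>j<N. if A i j then (y i - y j)\<^sup>2 else 0)"
proof -
  define g where "g p = (if A (fst p) (snd p) then (y (fst p) - y (snd p))\<^sup>2 else 0)" for p
  define ES where "ES = (\<Sum>p\<in>{..<N} \<times> {..<N}. g p)"
  have ES_eq: "ES = (\<Sum>i<N. \<Sum>j<N. if A i j then (y i - y j)\<^sup>2 else 0)"
    by (simp add: ES_def g_def sum.cartesian_product case_prod_beta)
  have ES_nonneg: "0 \<le> ES"
    unfolding ES_def g_def by (intro sum_nonneg) auto
  have pair: "(y i - y j)\<^sup>2 \<le> real N * ES" if ij: "i < N" "j < N" for i j
  proof -
    obtain xs where xs: "xs \<noteq> []" "hd xs = i" "last xs = j" "set xs \<subseteq> {..<N}"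
        "successively A xs" "distinct xs"
      using connected[OF ij] distinct_walk_if_walk by meson
    define n where "n = length xs - 1"
    have "length xs \<le> N"
      using distinct_card[OF xs(6)] card_mono[OF _ xs(4)] by fastforce
    have "(\<Sum>l<n. (y (xs ! l) - y (xs ! Suc l))\<^sup>2) = (\<Sum>l<n. g (xs ! l, xs ! Suc l))"
      using xs(5) by (intro sum.cong) (auto simp: g_def n_def successively_conv_nth)
    also have "\<dots> \<le> ES"
      unfolding ES_def n_def by (rule sum_consecutive_pairs_le[OF xs(6,4)]) (auto simp: g_def)
    finally have path_le: "(\<Sum>l<n. (y (xs ! l) - y (xs ! Suc l))\<^sup>2) \<le> ES" .
    have "(y i - y j)\<^sup>2 \<le> real n * (\<Sum>l<n. (y (xs ! l) - y (xs ! Suc l))\<^sup>2)"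
      using walk_diff_power2_le[OF xs(1), of y] xs(2,3) by (simp add: n_def)
    also have "\<dots> \<le> real n * ES"
      using path_le by (rule mult_left_mono) simp
    also have "\<dots> \<le> real N * ES"
      using \<open>length xs \<le> N\<close> ES_nonneg by (intro mult_right_mono) (auto simp: n_def)
    finally show ?thesis .
  qed
  have "(\<Sum>i<N. \<Sum>j<N. (y i - y j)\<^sup>2) \<le> (\<Sum>i<N. \<Sum>j<N. real N * ES)"
    by (intro sum_mono pair) auto
  also have "\<dots> = real N ^ 3 * ES" by (simp add: power3_eq_cube)
  finally show ?thesis unfolding ES_eq .
qed

lemma walk_if_chain_connected:
  fixes \<delta> :: "'p \<Rightarrow> 'p \<Rightarrow> real"
  assumes chain: "chain_connected \<delta> r {p i | i. i < N}" and "r > 0"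
    and commute: "\<And>a b. \<delta> a b = \<delta> b a" and triangle: "\<And>a b c. \<delta> a b \<le> \<delta> a c + \<delta> c b"
    and "i < N" "j < N"
  shows "\<exists>xs. xs \<noteq> [] \<and> hd xs = i \<and> last xs = j \<and> set xs \<subseteq> {..<N}
             \<and> successively (\<lambda>a b. \<delta> (p a) (p b) < r) xs"
proof -
  let ?P = "{p i | i. i < N}"
  let ?A = "\<lambda>a b. \<delta> (p a) (p b) < r"
  obtain cs where cs: "cs \<noteq> []" "set cs \<subseteq> ?P"
      "\<And>l. Suc l < length cs \<Longrightarrow> \<exists>z. \<delta> (cs ! l) z < r / 2 \<and> \<delta> (cs ! Suc l) z < r / 2"
      "\<delta> (hd cs) (p i) \<le> r / 2" "\<delta> (last cs) (p j) \<le> r / 2"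
    using chain \<open>i < N\<close> \<open>j < N\<close> unfolding chain_connected_def by blast
  define idx where "idx q = (SOME l. l < N \<and> p l = q)" for q
  have idx: "idx q < N" "p (idx q) = q" if "q \<in> set cs" for q
  proof -
    have "\<exists>l. l < N \<and> p l = q" using that cs(2) by auto
    then show "idx q < N" "p (idx q) = q" unfolding idx_def by (metis (mono_tags, lifting) someI_ex)+
  qed
  have "?A (idx (cs ! l)) (idx (cs ! Suc l))" if l: "Suc l < length cs" for l
  proof -
    obtain z where "\<delta> (cs ! l) z < r / 2" "\<delta> (cs ! Suc l) z < r / 2" using cs(3)[OF l] by blast
    then have "\<delta> (cs ! l) (cs ! Suc l) < r"
      using triangle[of "cs ! l" "cs ! Suc l" z] commute[of z] by simp
    then show ?thesis using idx l by simp
  qed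
  then have "successively ?A (map idx cs)"
    by (simp add: successively_map successively_conv_nth)
  moreover have "?A i (idx (hd cs))" "?A (idx (last cs)) j"
    using idx[of "hd cs"] idx[of "last cs"] cs(1,4,5) commute[of "p i"] \<open>r > 0\<close> by auto
  ultimately have "successively ?A ((i # map idx cs) @ [j])"
    using cs(1) by (auto simp: successively_append_iff successively_Cons hd_map last_map)
  moreover have "set ((i # map idx cs) @ [j]) \<subseteq> {..<N}" using idx \<open>i < N\<close> \<open>j < N\<close> by auto
  ultimately show ?thesis by (intro exI[of _ "(i # map idx cs) @ [j]"]) auto
qed

section \<open>Energy dissipation of the Cucker--Smale system\<close>

lemma sum_sum_diff_power2:
  fixes a :: "nat \<Rightarrow> real"
  shows "(\<Sum>i<N. \<Sum>j<N. (a i - a j)\<^sup>2) = 2 * real N * (\<Sum>i<N. (a i)\<^sup>2) - 2 * (\<Sum>i<N. a i)\<^sup>2"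
proof -
  have "(\<Sum>i<N. \<Sum>j<N. (a i - a j)\<^sup>2) = (\<Sum>i<N. \<Sum>j<N. ((a i)\<^sup>2 + (a j)\<^sup>2) - 2 * (a i * a j))"
    by (simp add: power2_eq_square algebra_simps)
  also have "\<dots> = (\<Sum>i<N. \<Sum>j<N. (a i)\<^sup>2) + (\<Sum>i<N. \<Sum>j<N. (a j)\<^sup>2) - 2 * (\<Sum>i<N. \<Sum>j<N. a i * a j)"
    by (simp only: sum_subtractf sum.distrib sum_distrib_left)
  also have "(\<Sum>i<N. \<Sum>j<N. a i * a j) = (\<Sum>i<N. a i)\<^sup>2"
    by (simp add: power2_eq_square sum_product)
  finally show ?thesis by (simp add: sum_distrib_left mult.assoc)
qed

lemma sum_sum_sym_mult_inner_diff:
  fixes w :: "nat \<Rightarrow> nat \<Rightarrow> real" and a :: "nat \<Rightarrow> nat \<Rightarrow> real"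
  assumes sym: "\<And>i j. w i j = w j i"
  shows "(\<Sum>i<N. \<Sum>j<N. w i j * (\<Sum>k<d. a i k * (a j k - a i k)))
       = - (1/2) * (\<Sum>i<N. \<Sum>j<N. w i j * (\<Sum>k<d. (a i k - a j k)\<^sup>2))"
proof -
  define S where "S = (\<Sum>i<N. \<Sum>j<N. w i j * (\<Sum>k<d. a i k * (a j k - a i k)))"
  have "S = (\<Sum>i<N. \<Sum>j<N. w i j * (\<Sum>k<d. a j k * (a i k - a j k)))"
    unfolding S_def by (subst sum.swap) (simp add: sym)
  then have "2 * S = (\<Sum>i<N. \<Sum>j<N. w i j * (\<Sum>k<d. a i k * (a j k - a i k) + a j k * (a i k - a j k)))"
    by (simp add: S_def sum.distrib distrib_left)
  also have "\<dots> = - (\<Sum>i<N. \<Sum>j<N. w i j * (\<Sum>k<d. (a i k - a j k)\<^sup>2))"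
  proof -
    have "(\<Sum>k<d. a i k * (a j k - a i k) + a j k * (a i k - a j k)) = - (\<Sum>k<d. (a i k - a j k)\<^sup>2)"
      for i j by (simp add: power2_eq_square algebra_simps flip: sum_negf)
    then show ?thesis by (simp add: sum_negf)
  qed
  finally show ?thesis unfolding S_def by simp
qed

lemma ge_1_if_less_D_phi:
  assumes "0 < h" "ereal h < D_phi \<phi>"
  shows "1 \<le> \<phi> h"
proof -
  obtain s where "s > 0" "\<forall>h. 0 < h \<and> h \<le> s \<longrightarrow> 1 \<le> \<phi> h" "ereal h < ereal s"
    using assms(2) unfolding D_phi_def by (auto simp: less_Sup_iff)
  then show ?thesis using assms(1) by auto
qed

lemma dv2_nonneg: "0 \<le> dv2 d N v t"
  unfolding dv2_def by (intro real_sqrt_ge_zero mult_nonneg_nonneg sum_nonneg) auto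

lemma dvinf_nonneg:
  assumes "0 < N"
  shows "0 \<le> dvinf d N v t"
proof -
  let ?S = "{enorm d (\<lambda>k. v i t k - v j t k) | i j. i < N \<and> j < N}"
  have "?S = (\<lambda>(i, j). enorm d (\<lambda>k. v i t k - v j t k)) ` ({..<N} \<times> {..<N})" by auto
  then have "finite ?S" by simp
  moreover have "enorm d (\<lambda>k. v 0 t k - v 0 t k) \<in> ?S" using assms by blast
  ultimately show ?thesis unfolding dvinf_def by (meson Max_ge enorm_nonneg order_trans)
qed

locale cucker_smale =
  fixes torus :: bool and L :: real and d N :: nat and \<kappa> :: real and \<phi> :: "real \<Rightarrow> real"
    and x v :: "nat \<Rightarrow> real \<Rightarrow> nat \<Rightarrow> real"
  assumes L_pos: "0 < L" and N_pos: "0 < N" and \<kappa>_pos: "0 < \<kappa>"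
    and \<phi>_nonneg: "\<And>h. 0 \<le> h \<Longrightarrow> 0 \<le> \<phi> h"
    and solution: "CS_solution torus L d N \<kappa> \<phi> x v"
begin

definition pdist :: "nat \<Rightarrow> nat \<Rightarrow> real \<Rightarrow> real" where
  "pdist i j t = omega_dist torus L d (x i t) (x j t)"

definition accel :: "nat \<Rightarrow> real \<Rightarrow> nat \<Rightarrow> real" where
  "accel i t k = \<kappa> / real N * (\<Sum>j<N. \<phi> (pdist i j t) * (v j t k - v i t k))"

definition deviation :: "nat \<Rightarrow> real \<Rightarrow> nat \<Rightarrow> real" where
  "deviation i t k = v i t k - vbar0 N v k"

definition energy :: "real \<Rightarrow> real" where
  "energy t = (\<Sum>i<N. \<Sum>k<d. (deviation i t k)\<^sup>2)"

definition dissipation :: "real \<Rightarrow> real" where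
  "dissipation t =
    (\<Sum>i<N. \<Sum>j<N. \<phi> (pdist i j t) * (\<Sum>k<d. (deviation i t k - deviation j t k)\<^sup>2))"

text \<open>Times at which two agents occupy the same point of \<open>\<Omega>\<close> with different velocities;
  only there can \<open>\<phi>(0)\<close>, on which nothing is assumed, enter the dissipation.\<close>
definition collisions :: "nat \<Rightarrow> nat \<Rightarrow> real set" where
  "collisions i j = {t. 0 \<le> t \<and> pdist i j t = 0 \<and> (\<exists>k<d. v i t k \<noteq> v j t k)}"

definition collision_times :: "real set" where
  "collision_times = (\<Union>i<N. \<Union>j<N. collisions i j)"

lemma has_derivative_x:
  "i < N \<Longrightarrow> k < d \<Longrightarrow> 0 \<le> t \<Longrightarrow> ((\<lambda>s. x i s k) has_real_derivative v i t k) (at t within {0..})"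
  using solution unfolding CS_solution_def by blast

lemma has_derivative_v:
  "i < N \<Longrightarrow> k < d \<Longrightarrow> 0 \<le> t \<Longrightarrow> ((\<lambda>s. v i s k) has_real_derivative accel i t k) (at t within {0..})"
  using solution unfolding CS_solution_def accel_def pdist_def by blast

lemma pdist_commute: "pdist i j t = pdist j i t"
  unfolding pdist_def by (rule omega_dist_commute)

lemma pdist_nonneg: "0 \<le> pdist i j t"
  unfolding pdist_def by (rule omega_dist_nonneg)

lemma sum_accel_eq_0: "(\<Sum>i<N. accel i t k) = 0"
proof -
  have "(\<Sum>i<N. \<Sum>j<N. \<phi> (pdist i j t) * v j t k) = (\<Sum>i<N. \<Sum>j<N. \<phi> (pdist i j t) * v i t k)"
    by (subst sum.swap) (simp add: pdist_commute)
  then have "(\<Sum>i<N. \<Sum>j<N. \<phi> (pdist i j t) * (v j t k - v i t k)) = 0"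
    by (simp add: right_diff_distrib sum_subtractf)
  moreover have "(\<Sum>i<N. accel i t k) = \<kappa> / real N * (\<Sum>i<N. \<Sum>j<N. \<phi> (pdist i j t) * (v j t k - v i t k))"
    by (simp add: accel_def sum_distrib_left)
  ultimately show ?thesis by simp
qed

lemma sum_v_conserved:
  assumes "k < d" "0 \<le> t"
  shows "(\<Sum>i<N. v i t k) = (\<Sum>i<N. v i 0 k)"
proof -
  have "((\<lambda>s. \<Sum>i<N. v i s k) has_field_derivative 0) (at s within {0..})" if "s \<in> {0..}" for s
  proof -
    have "((\<lambda>s. \<Sum>i<N. v i s k) has_field_derivative (\<Sum>i<N. accel i s k)) (at s within {0..})"
      using assms(1) that by (intro DERIV_sum has_derivative_v) auto
    then show ?thesis by (simp add: sum_accel_eq_0)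
  qed
  then obtain c where "\<forall>s\<in>{0..}. (\<Sum>i<N. v i s k) = c"
    using has_field_derivative_zero_constant[of "{0..}" "\<lambda>s. \<Sum>i<N. v i s k"]
    by (auto simp: convex_real_interval)
  then show ?thesis using assms(2) by simp
qed

lemma sum_deviation_eq_0:
  assumes "k < d" "0 \<le> t"
  shows "(\<Sum>i<N. deviation i t k) = 0"
proof -
  have "(\<Sum>i<N. deviation i t k) = (\<Sum>i<N. v i t k) - real N * vbar0 N v k"
    by (simp add: deviation_def sum_subtractf)
  also have "\<dots> = 0"
    using sum_v_conserved[OF assms] N_pos by (simp add: vbar0_def)
  finally show ?thesis .
qed

lemma energy_nonneg: "0 \<le> energy t"
  unfolding energy_def by (intro sum_nonneg) auto

lemma enorm_deviation_le: "i < N \<Longrightarrow> enorm d (deviation i t) \<le> sqrt (energy t)"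
  unfolding enorm_def energy_def
  by (intro real_sqrt_le_mono member_le_sum[of i "{..<N}" "\<lambda>i. \<Sum>k<d. (deviation i t k)\<^sup>2"])
     (auto intro!: sum_nonneg)

lemma energy_has_derivative:
  assumes "0 \<le> t"
  shows "(energy has_real_derivative - (\<kappa> / real N) * dissipation t) (at t within {0..})"
proof -
  have accel_eq: "accel i t k = \<kappa> / real N * (\<Sum>j<N. \<phi> (pdist i j t) * (deviation j t k - deviation i t k))"
    for i k by (simp add: accel_def deviation_def)
  have "(energy has_real_derivative (\<Sum>i<N. \<Sum>k<d. 2 * deviation i t k * accel i t k)) (at t within {0..})"
    unfolding energy_def[abs_def] deviation_def using assms
    by (auto intro!: DERIV_sum derivative_eq_intros has_derivative_v)
  also have "(\<Sum>i<N. \<Sum>k<d. 2 * deviation i t k * accel i t k)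
      = 2 * (\<kappa> / real N) * (\<Sum>i<N. \<Sum>j<N. \<phi> (pdist i j t) *
           (\<Sum>k<d. deviation i t k * (deviation j t k - deviation i t k)))"
    by (simp add: accel_eq sum_distrib_left sum.swap[of _ "{..<d}"] mult_ac)
  also have "\<dots> = - (\<kappa> / real N) * dissipation t"
    unfolding dissipation_def by (subst sum_sum_sym_mult_inner_diff) (auto simp: pdist_commute)
  finally show ?thesis .
qed

lemma dv2_power2: "0 \<le> t \<Longrightarrow> (dv2 d N v t)\<^sup>2 = 2 * energy t / real N"
proof -
  assume "0 \<le> t"
  have "(\<Sum>i<N. \<Sum>j<N. (enorm d (\<lambda>k. v i t k - v j t k))\<^sup>2)
      = (\<Sum>k<d. \<Sum>i<N. \<Sum>j<N. (deviation i t k - deviation j t k)\<^sup>2)"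
    by (simp add: enorm_power2 deviation_def sum.swap[of _ _ "{..<d}"])
  also have "\<dots> = (\<Sum>k<d. 2 * real N * (\<Sum>i<N. (deviation i t k)\<^sup>2))"
    using \<open>0 \<le> t\<close> by (intro sum.cong refl) (simp add: sum_sum_diff_power2 sum_deviation_eq_0)
  also have "\<dots> = 2 * real N * energy t"
    by (simp add: energy_def sum_distrib_left sum.swap[of _ "{..<N}"])
  finally show ?thesis
    using N_pos energy_nonneg[of t] by (simp add: dv2_def sum_nonneg power2_eq_square field_simps)
qed

lemma sqrt_energy_le_dv2: "0 \<le> t \<Longrightarrow> sqrt (energy t) \<le> real N * dv2 d N v t"
proof -
  assume "0 \<le> t"
  have "1 \<le> real N" using N_pos by simp
  then have N_mono: "(dv2 d N v t)\<^sup>2 \<le> real N * (dv2 d N v t)\<^sup>2"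
    using mult_right_mono[of 1 "real N" "(dv2 d N v t)\<^sup>2"] by simp
  have "energy t = real N * (dv2 d N v t)\<^sup>2 / 2"
    using dv2_power2[OF \<open>0 \<le> t\<close>] N_pos by (simp add: field_simps)
  also have "\<dots> \<le> real N * (dv2 d N v t)\<^sup>2" by simp
  also have "\<dots> \<le> real N * (real N * (dv2 d N v t)\<^sup>2)"
    using N_mono by (rule mult_left_mono) simp
  also have "\<dots> = (real N * dv2 d N v t)\<^sup>2" by (simp add: power2_eq_square)
  finally have "sqrt (energy t) \<le> sqrt ((real N * dv2 d N v t)\<^sup>2)"
    by (rule real_sqrt_le_mono)
  then show ?thesis using dv2_nonneg[of d N v t] by simp
qed

text \<open>At a collision time the relative position of the two agents lies in the lattice \<open>L \<int>\<^sup>d\<close>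
  and moves with nonzero velocity in some coordinate, so it leaves the lattice immediately.\<close>
lemma collision_isolated:
  assumes "i < N" "j < N" "t0 \<in> collisions i j"
  shows "t0 isolated_in collisions i j"
proof -
  obtain k where "k < d" "v i t0 k \<noteq> v j t0 k" "0 \<le> t0"
    using \<open>t0 \<in> collisions i j\<close> by (auto simp: collisions_def)
  define f where "f s = x i s k - x j s k" for s
  have "(f has_real_derivative v i t0 k - v j t0 k) (at t0 within {0..})"
    unfolding f_def using assms(1,2) \<open>k < d\<close> \<open>0 \<le> t0\<close> by (intro DERIV_diff has_derivative_x) auto
  then have "eventually (\<lambda>s. 0 < \<bar>f s - f t0\<bar> \<and> \<bar>f s - f t0\<bar> < L) (at t0 within {0..})"
    using \<open>v i t0 k \<noteq> v j t0 k\<close> L_pos by (intro eventually_nonzero_small_increment) auto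
  then obtain \<epsilon> where "\<epsilon> > 0"
    and near: "\<And>s. s \<in> {0..} \<Longrightarrow> s \<noteq> t0 \<Longrightarrow> dist s t0 < \<epsilon> \<Longrightarrow> 0 < \<bar>f s - f t0\<bar> \<and> \<bar>f s - f t0\<bar> < L"
    unfolding eventually_at by blast
  have lattice: "\<exists>m::int. f s = L * m" if "s \<in> collisions i j" for s
    using that \<open>k < d\<close> L_pos omega_dist_eq_0_imp_int_multiple
    by (auto simp: collisions_def pdist_def f_def)
  have "s = t0" if s: "s \<in> collisions i j" "dist t0 s < \<epsilon>" for s
  proof (rule ccontr)
    assume "s \<noteq> t0"
    then have "0 < \<bar>f s - f t0\<bar>" "\<bar>f s - f t0\<bar> < L"
      using near[of s] s by (auto simp: collisions_def dist_commute)
    moreover obtain m m' :: int where "f s = L * m" "f t0 = L * m'"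
      using lattice s(1) assms(3) by blast
    then have "f s - f t0 = L * of_int (m - m')" by (simp add: right_diff_distrib)
    ultimately have "m \<noteq> m'" "\<bar>real_of_int (m - m')\<bar> < 1"
      using L_pos by (auto simp: abs_mult)
    then show False by (simp flip: of_int_abs)
  qed
  then show ?thesis
    unfolding isolated_in_dist_Ex_iff using \<open>t0 \<in> collisions i j\<close> \<open>\<epsilon> > 0\<close> by blast
qed

lemma negligible_collision_times: "negligible collision_times"
proof -
  have "countable (collisions i j)" if "i < N" "j < N" for i j
    using collision_isolated[OF that] by (intro countable_if_discrete discreteI)
  then show ?thesis
    by (auto simp: collision_times_def intro!: negligible_if_countable countable_UN)
qed

end

section \<open>Flocking\<close>

locale cucker_smale_chain = cucker_smale +
  fixes r :: real
  assumes r_pos: "0 < r"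
    and chain: "chain_connected (omega_dist torus L d) r {x i 0 | i. i < N}"
    and r_le_D_phi: "ereal r \<le> D_phi \<phi> / 6"
    and \<kappa>_large: "16 * real N ^ 4 * dv2 d N v 0 \<le> \<kappa> * r"
begin

definition drift :: "nat \<Rightarrow> nat \<Rightarrow> real \<Rightarrow> real" where
  "drift i j t = enorm d (\<lambda>k. (x i t k - x j t k) - (x i 0 k - x j 0 k))"

definition decay_rate :: real where
  "decay_rate = 2 * \<kappa> / real N ^ 3"

lemma decay_rate_pos: "0 < decay_rate"
  using \<kappa>_pos N_pos by (simp add: decay_rate_def)

lemma \<phi>_ge_1:
  assumes "0 < h" "h < 2 * r"
  shows "1 \<le> \<phi> h"
proof (rule ge_1_if_less_D_phi[OF \<open>0 < h\<close>])
  show "ereal h < D_phi \<phi>"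
  proof (cases "D_phi \<phi>")
    case (real D)
    then show ?thesis using r_le_D_phi \<open>h < 2 * r\<close> r_pos by simp
  qed (use r_le_D_phi in auto)
qed

lemma energy_poincare:
  assumes "0 \<le> t"
  shows "2 * energy t \<le> (real N)\<^sup>2 *
    (\<Sum>i<N. \<Sum>j<N. if pdist i j 0 < r then (\<Sum>k<d. (deviation i t k - deviation j t k)\<^sup>2) else 0)"
proof -
  have walk: "\<exists>xs. xs \<noteq> [] \<and> hd xs = i \<and> last xs = j \<and> set xs \<subseteq> {..<N}
                 \<and> successively (\<lambda>a b. pdist a b 0 < r) xs" if "i < N" "j < N" for i j
    using walk_if_chain_connected[OF chain r_pos omega_dist_commute omega_dist_triangle that]
    by (simp add: pdist_def)
  define g where "g i j k = (if pdist i j 0 < r then (deviation i t k - deviation j t k)\<^sup>2 else 0)" for i j k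
  have "2 * real N * (\<Sum>i<N. (deviation i t k)\<^sup>2) \<le> real N ^ 3 * (\<Sum>i<N. \<Sum>j<N. g i j k)"
    if "k < d" for k
    using graph_poincare[OF walk, of "\<lambda>i. deviation i t k"] sum_sum_diff_power2[of "\<lambda>i. deviation i t k" N]
      sum_deviation_eq_0[OF that assms] by (simp add: g_def)
  then have "(\<Sum>k<d. 2 * real N * (\<Sum>i<N. (deviation i t k)\<^sup>2))
      \<le> (\<Sum>k<d. real N ^ 3 * (\<Sum>i<N. \<Sum>j<N. g i j k))"
    by (intro sum_mono) auto
  moreover have "(\<Sum>k<d. 2 * real N * (\<Sum>i<N. (deviation i t k)\<^sup>2)) = real N * (2 * energy t)"
    by (simp add: energy_def sum_distrib_left sum.swap[of _ "{..<N}"] mult_ac)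
  moreover have "(\<Sum>k<d. real N ^ 3 * (\<Sum>i<N. \<Sum>j<N. g i j k))
      = real N * ((real N)\<^sup>2 * (\<Sum>i<N. \<Sum>j<N. if pdist i j 0 < r
          then (\<Sum>k<d. (deviation i t k - deviation j t k)\<^sup>2) else 0))"
    by (simp add: g_def sum_distrib_left sum.swap[of _ "{..<d}"] power3_eq_cube power2_eq_square mult_ac
        if_distrib[of "\<lambda>s. _ * s"] sum.If_cases)
  ultimately show ?thesis using N_pos by simp
qed

text \<open>Initially close agents that have drifted by at most \<open>r\<close> are at distance less than
  \<open>2r < D\<^sub>\<phi>\<close>, so \<open>\<phi> \<ge> 1\<close> at their distance unless it is \<open>0\<close>.\<close>
lemma close_pairs_le_dissipation:
  assumes "0 \<le> t" "t \<notin> collision_times" and drift: "\<And>i j. i < N \<Longrightarrow> j < N \<Longrightarrow> drift i j t \<le> r"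
  shows "(\<Sum>i<N. \<Sum>j<N. if pdist i j 0 < r then (\<Sum>k<d. (deviation i t k - deviation j t k)\<^sup>2) else 0)
           \<le> dissipation t"
  unfolding dissipation_def
proof (intro sum_mono)
  fix i j assume "i \<in> {..<N}" "j \<in> {..<N}"
  define S where "S = (\<Sum>k<d. (deviation i t k - deviation j t k)\<^sup>2)"
  have "0 \<le> S" unfolding S_def by (intro sum_nonneg) auto
  have "S \<le> \<phi> (pdist i j t) * S" if "pdist i j 0 < r"
  proof (cases "pdist i j t = 0")
    case True
    then have "v i t k = v j t k" if "k < d" for k
      using assms(1,2) \<open>i \<in> {..<N}\<close> \<open>j \<in> {..<N}\<close> that
      by (auto simp: collision_times_def collisions_def)
    then show ?thesis by (simp add: S_def deviation_def)
  next
    case False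
    have "pdist i j t \<le> pdist i j 0 + drift i j t"
      unfolding pdist_def drift_def by (rule omega_dist_le_shift)
    also have "\<dots> < 2 * r" using that drift \<open>i \<in> {..<N}\<close> \<open>j \<in> {..<N}\<close> by fastforce
    finally have "1 \<le> \<phi> (pdist i j t)"
      using False pdist_nonneg[of i j t] by (intro \<phi>_ge_1) auto
    then show ?thesis using \<open>0 \<le> S\<close> mult_right_mono[of 1 "\<phi> (pdist i j t)" S] by simp
  qed
  moreover have "0 \<le> \<phi> (pdist i j t) * S" using \<open>0 \<le> S\<close> \<phi>_nonneg pdist_nonneg by simp
  ultimately show "(if pdist i j 0 < r then S else 0) \<le> \<phi> (pdist i j t) * S" by simp
qed

lemma energy_decay:
  assumes "0 \<le> T" and drift: "\<And>t i j. t \<in> {0..T} \<Longrightarrow> i < N \<Longrightarrow> j < N \<Longrightarrow> drift i j t \<le> r"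
  shows "energy T \<le> energy 0 * exp (- decay_rate * T)"
proof -
  have decay: "- (\<kappa> / real N) * dissipation t \<le> - decay_rate * energy t"
    if t: "t \<in> {0..T} - collision_times" for t
  proof -
    have "2 * energy t \<le> (real N)\<^sup>2 *
        (\<Sum>i<N. \<Sum>j<N. if pdist i j 0 < r then (\<Sum>k<d. (deviation i t k - deviation j t k)\<^sup>2) else 0)"
      using t by (intro energy_poincare) simp
    also have "\<dots> \<le> (real N)\<^sup>2 * dissipation t"
      using t drift by (intro mult_left_mono close_pairs_le_dissipation) auto
    finally have "\<kappa> / real N ^ 3 * (2 * energy t) \<le> \<kappa> / real N ^ 3 * ((real N)\<^sup>2 * dissipation t)"
      using \<kappa>_pos by (intro mult_left_mono) auto
    then show ?thesis
      using N_pos by (simp add: decay_rate_def power2_eq_square power3_eq_cube field_simps)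
  qed
  have deriv: "(energy has_real_derivative - (\<kappa> / real N) * dissipation t) (at t within {0..})"
    if "t \<in> {0..T}" for t
    using that by (intro energy_has_derivative) simp
  show ?thesis
    using exp_decay_if_deriv_le[OF \<open>0 \<le> T\<close> _ deriv negligible_collision_times decay] by simp
qed

lemma drift_le_of_energy_decay:
  assumes "0 \<le> T" and decay: "\<And>t. t \<in> {0..T} \<Longrightarrow> energy t \<le> energy 0 * exp (- decay_rate * t)"
    and "i < N" "j < N"
  shows "drift i j T \<le> 4 * sqrt (energy 0) / decay_rate"
proof -
  have speed: "enorm d (\<lambda>k. v i t k - v j t k) \<le> 2 * sqrt (energy 0) * exp (- (decay_rate / 2) * (t - 0))"
    if "t \<in> {0..T}" for t
  proof -
    have "enorm d (\<lambda>k. v i t k - v j t k) \<le> enorm d (deviation i t) + enorm d (deviation j t)"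
      using enorm_diff_triangle[of d "v i t" "v j t" "vbar0 N v"] enorm_diff_commute[of d "vbar0 N v" "v j t"]
      by (simp add: deviation_def[abs_def])
    also have "\<dots> \<le> 2 * sqrt (energy t)"
      using enorm_deviation_le \<open>i < N\<close> \<open>j < N\<close> by (smt (verit))
    also have "sqrt (energy t) \<le> sqrt (energy 0 * exp (- decay_rate * t))"
      using decay[OF that] by (rule real_sqrt_le_mono)
    also have "\<dots> = sqrt (energy 0) * exp (- (decay_rate / 2) * t)"
      using energy_nonneg by (simp add: real_sqrt_mult sqrt_exp)
    finally show ?thesis by simp
  qed
  have "enorm d (\<lambda>k. (x i T k - x j T k) - (x i 0 k - x j 0 k)) \<le> 2 * sqrt (energy 0) / (decay_rate / 2)"
    using decay_rate_pos \<open>0 \<le> T\<close> \<open>i < N\<close> \<open>j < N\<close> speed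
    by (intro enorm_displacement_le[where U = "{0..}" and V = "\<lambda>t k. v i t k - v j t k"])
       (auto intro!: DERIV_diff has_derivative_x)
  then show ?thesis by (simp add: drift_def)
qed

lemma drift_bound_le_half: "4 * sqrt (energy 0) / decay_rate \<le> r / 2"
proof -
  have "4 * sqrt (energy 0) * real N ^ 3 \<le> 4 * (real N * dv2 d N v 0) * real N ^ 3"
    using sqrt_energy_le_dv2[of 0] by (intro mult_right_mono) auto
  also have "\<dots> = 4 * (real N ^ 4 * dv2 d N v 0)" by (simp add: eval_nat_numeral)
  also have "\<dots> \<le> \<kappa> * r"
    using \<kappa>_large mult_nonneg_nonneg[OF zero_le_power[of "real N" 4] dv2_nonneg[of d N v 0]] by linarith
  finally show ?thesis
    using \<kappa>_pos N_pos by (simp add: decay_rate_def field_simps)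
qed

lemma drift_continuous: "i < N \<Longrightarrow> j < N \<Longrightarrow> 0 \<le> t \<Longrightarrow> continuous (at t within {0..}) (drift i j)"
  unfolding drift_def[abs_def] enorm_def
  by (intro continuous_intros DERIV_continuous[OF has_derivative_x]) auto

lemma drift_le:
  assumes "0 \<le> t" "i < N" "j < N"
  shows "drift i j t \<le> r"
proof -
  have "drift (fst (i, j)) (snd (i, j)) t \<le> r"
  proof (rule bound_by_continuous_induction
      [where I = "{..<N} \<times> {..<N}" and f = "\<lambda>p. drift (fst p) (snd p)" and i = "(i, j)"])
    fix s p
    assume "0 \<le> s" "p \<in> {..<N} \<times> {..<N}"
      and drift_s: "\<And>t q. t \<in> {0..s} \<Longrightarrow> q \<in> {..<N} \<times> {..<N} \<Longrightarrow> drift (fst q) (snd q) t \<le> r"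
    have "energy \<tau> \<le> energy 0 * exp (- decay_rate * \<tau>)" if "\<tau> \<in> {0..s}" for \<tau>
      using that drift_s[of _ "(_, _)"] by (intro energy_decay) auto
    then have "drift (fst p) (snd p) s \<le> 4 * sqrt (energy 0) / decay_rate"
      using \<open>0 \<le> s\<close> \<open>p \<in> {..<N} \<times> {..<N}\<close> by (intro drift_le_of_energy_decay) auto
    then show "drift (fst p) (snd p) s < r"
      using drift_bound_le_half r_pos by simp
  next
    show "drift (fst p) (snd p) 0 \<le> r" if "p \<in> {..<N} \<times> {..<N}" for p
      using r_pos by (simp add: drift_def enorm_def)
  next
    show "continuous (at s within {0..}) (drift (fst p) (snd p))"
      if "p \<in> {..<N} \<times> {..<N}" "0 \<le> s" for p s
      using that by (auto intro: drift_continuous)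
  qed (use assms in auto)
  then show ?thesis by simp
qed

lemma sqrt_energy_le_exp:
  assumes "0 \<le> t"
  shows "sqrt (energy t) \<le> real N * dv2 d N v 0 * exp (- (\<kappa> / real N ^ 3) * t)"
proof -
  have "energy t \<le> energy 0 * exp (- decay_rate * t)"
    by (rule energy_decay[OF assms]) (rule drift_le; simp)
  then have "sqrt (energy t) \<le> sqrt (energy 0 * exp (- decay_rate * t))"
    by (rule real_sqrt_le_mono)
  also have "\<dots> = sqrt (energy 0) * exp (- (\<kappa> / real N ^ 3) * t)"
    using energy_nonneg by (simp add: real_sqrt_mult decay_rate_def sqrt_exp)
  also have "\<dots> \<le> real N * dv2 d N v 0 * exp (- (\<kappa> / real N ^ 3) * t)"
    using sqrt_energy_le_dv2[of 0] by (intro mult_right_mono) auto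
  finally show ?thesis .
qed

lemma flocking:
  assumes "0 \<le> t"
  shows "Max {enorm d (\<lambda>k. v i t k - vbar0 N v k) | i. i < N}
           \<le> dvinf d N v 0 * exp (- (\<kappa> / real N) * t)
              + 2 * real N * dv2 d N v 0 * exp (- (\<kappa> / (real N)^3) * t)"
proof -
  have "enorm d (\<lambda>k. v i t k - vbar0 N v k)
      \<le> dvinf d N v 0 * exp (- (\<kappa> / real N) * t) + 2 * real N * dv2 d N v 0 * exp (- (\<kappa> / real N ^ 3) * t)"
    if "i < N" for i
  proof -
    have "enorm d (\<lambda>k. v i t k - vbar0 N v k) \<le> real N * dv2 d N v 0 * exp (- (\<kappa> / real N ^ 3) * t)"
      using order_trans[OF enorm_deviation_le[OF that] sqrt_energy_le_exp[OF assms]]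
      by (simp add: deviation_def[abs_def])
    moreover have "0 \<le> dvinf d N v 0 * exp (- (\<kappa> / real N) * t)"
      using dvinf_nonneg N_pos by simp
    moreover have "0 \<le> real N * dv2 d N v 0 * exp (- (\<kappa> / real N ^ 3) * t)"
      using dv2_nonneg by simp
    ultimately show ?thesis by linarith
  qed
  moreover have "finite {enorm d (\<lambda>k. v i t k - vbar0 N v k) | i. i < N}" by simp
  moreover have "{enorm d (\<lambda>k. v i t k - vbar0 N v k) | i. i < N} \<noteq> {}" using N_pos by auto
  ultimately show ?thesis by (subst Max_le_iff) blast+
qed

end

theorem theorem1p2:
  "\<exists>C::real. C \<ge> 1 \<and>
    (\<forall>(torus::bool) (L::real) (d::nat) (N::nat) (\<kappa>::real) (\<phi>::real \<Rightarrow> real)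
       (x::nat \<Rightarrow> real \<Rightarrow> nat \<Rightarrow> real) (v::nat \<Rightarrow> real \<Rightarrow> nat \<Rightarrow> real) (r::real).
      L > 0 \<longrightarrow> N \<ge> 1 \<longrightarrow> \<kappa> > 0 \<longrightarrow>
      (\<forall>h\<ge>0. \<phi> h \<ge> 0) \<longrightarrow>
      D_phi \<phi> > 0 \<longrightarrow>
      CS_solution torus L d N \<kappa> \<phi> x v \<longrightarrow>
      r > 0 \<longrightarrow>
      chain_connected (omega_dist torus L d) r {x i 0 | i. i < N} \<longrightarrow>
      ereal r \<le> D_phi \<phi> / 6 \<longrightarrow>
      \<kappa> \<ge> C * (16 * (real N)^4 / r * dv2 d N v 0) \<longrightarrow>
      (\<forall>t\<ge>0.
         Max {enorm d (\<lambda>k. v i t k - vbar0 N v k) | i. i < N}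
           \<le> dvinf d N v 0 * exp (- (\<kappa> / real N) * t)
              + 2 * real N * dv2 d N v 0 * exp (- (\<kappa> / (real N)^3) * t)))"
proof (intro exI[of _ 1] conjI allI impI)
  fix torus L d N \<kappa> \<phi> x v r t
  assume "L > 0" "N \<ge> 1" "\<kappa> > 0" "\<forall>h\<ge>0. \<phi> h \<ge> (0::real)" "CS_solution torus L d N \<kappa> \<phi> x v"
    "r > 0" "chain_connected (omega_dist torus L d) r {x i 0 | i. i < N}" "ereal r \<le> D_phi \<phi> / 6"
    "\<kappa> \<ge> 1 * (16 * (real N)^4 / r * dv2 d N v 0)" "(t::real) \<ge> 0"
  then interpret cucker_smale_chain torus L d N \<kappa> \<phi> x v r
    by unfold_locales (auto simp: field_simps)
  show "Max {enorm d (\<lambda>k. v i t k - vbar0 N v k) | i. i < N}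
          \<le> dvinf d N v 0 * exp (- (\<kappa> / real N) * t) + 2 * real N * dv2 d N v 0 * exp (- (\<kappa> / (real N)^3) * t)"
    using \<open>t \<ge> 0\<close> by (rule flocking)
qed simp

end
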